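(* Let $a=(p_a,Rd_a,Wt_a)\in\mathsf{Lab}$ and $\beta\in\mathsf{Lab}\uplus\underline{\mathsf{Lab}}$ with $\mathsf{und}(\beta)=(p_\beta,Rd_\beta,Wt_\beta)$, and assume $Wt_a\subseteq Rd_a$ and $Wt_\beta\subseteq Rd_\beta$. Suppose $A\to_{ann}^{\underline a}A'$ and $A\to_{ann}^{\beta}A''$ with $\underline a\;\iota_{lab}\;\beta$. Then there is an annotation DAG $A'''$ such that $A''\to_{ann}^{\underline a}A'''$ and $\mathsf{diff}(A\to_{ann}^{\underline a}A')=\mathsf{diff}(A''\to_{ann}^{\underline a}A''')$.
   Context: Fix a set $\mathcal{R}$ of memory resources. Let $\mathsf{PID}=(\mathbb{N}_+)^*$ be the set of finite words over the positive integers, with $\preceq$ the prefix order. An annotation DAG is a triple $A=(V,E_R,E_W)$ such that: (1) $V\subseteq(\mathsf{PID}\times\mathbb{N})\cup\{\bot\}$ is finite, $\bot\in V$, and $(p,n)\in V$ implies $(p,n')\in V$ for all $n'\le n$; (2) $E_R,E_W\subseteq V\times\mathcal{R}\times V$, and $(v',r,v),(v'',r,v)\in E_R\cup E_W$ implies $v'=v''$; (3) $E_R\cap E_W=\varnothing$ and the directed graph $(V,E_R\cup E_W)$ is acyclic; (4) if $(v',r,v)\in E_W$ and $v'\neq\bot$ then $(v'',r,v')\in E_W$ for some $v''$; (5) $(v,r,v'),(v,r,v'')\in E_W$ implies $v'=v''$. For $r\in\mathcal{R}$, $\mathsf{last}(r,E_W)$ is $\bot$ if $E_W$ has no edge labelled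 $r$, and otherwise is the final node of the unique path from $\bot$ consisting of all $E_W$-edges labelled $r$. For $p\in\mathsf{PID}$, $\mathsf{max}_p(V)=\max\{n:(p,n)\in V\}$, or $-1$ if there is no such $n$. Let $\mathsf{Lab}=\mathsf{PID}\times2^{\mathcal{R}}\times2^{\mathcal{R}}$ and $\underline{\mathsf{Lab}}=\{\underline{a}:a\in\mathsf{Lab}\}$ a disjoint copy; $\mathsf{und}(a)=\mathsf{und}(\underline a)=a$. For $a=(p,Rd,Wt)\in\mathsf{Lab}$ and annotation DAGs $A_1=(V_1,E_{R1},E_{W1})$, $A_2=(V_2,E_{R2},E_{W2})$, write $A_1\to_{ann}^{a}A_2$ iff, with $v=(p,\mathsf{max}_p(V_1)+1)$ and $\mathsf{newedge}(r,E_W,v)=(\mathsf{last}(r,E_W),r,v)$: $V_2=V_1\cup\{v\}$, $E_{R2}=E_{R1}\cup\{\mathsf{newedge}(r,E_{W1},v): r\in Rd\setminus Wt\}$, $E_{W2}=E_{W1}\cup\{\mathsf{newedge}(r,E_{W1},v): r\in Wt\}$; and write $A_2\to_{ann}^{\underline a}A_1$ iff $A_1\to_{ann}^{a}A_2$. For $\alpha,\beta\in\mathsf{Lab}\uplus\underline{\mathsf{Lab}}$ with $\mathsf{und}(\alpha)=(p_1,Rd_1,Wt_1)$, $\mathsf{und}(\beta)=(p_2,Rd_2,Wt_2)$, define $\alpha\;\iota_{lab}\;\beta$ iff $p_1\not\preceq p_2$, $p_2\not\preceq p_1$, $Rd_1\cap Wt_2=\varnothing$ and $Rd_2\cap Wt_1=\varnothing$.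 For $o:(V,E_R,E_W)\to_{ann}^{\alpha}(V',E'_R,E'_W)$, $\mathsf{diff}(o)=(V'\setminus V,E'_R\setminus E_R,E'_W\setminus E_W)$ if $\alpha\in\mathsf{Lab}$ and $\mathsf{diff}(o)=(V\setminus V',E_R\setminus E'_R,E_W\setminus E'_W)$ if $\alpha\in\underline{\mathsf{Lab}}$. (In the paper, labels arise from basic blocks for which the set of written resources is contained in the set of read resources; this is recorded here as the hypothesis $Wt\subseteq Rd$.) *)

theory Defs
  imports Main "HOL-Library.Sublist"
begin

text \<open>Process identifiers: finite words over positive integers (prefix order = Sublist.prefix).\<close>
type_synonym pid = "nat list"

definition valid_pid :: "pid \<Rightarrow> bool" where
  "valid_pid p \<longleftrightarrow> (\<forall>x\<in>set p. 0 < x)"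

text \<open>Nodes: None is bottom, Some (p,n) is the node (p,n).\<close>
type_synonym node = "(pid \<times> nat) option"
type_synonym 'r edges = "(node \<times> 'r \<times> node) set"
type_synonym 'r ann = "node set \<times> 'r edges \<times> 'r edges"

definition is_ann_dag :: "'r ann \<Rightarrow> bool" where
  "is_ann_dag A \<longleftrightarrow> (case A of (V, ER, EW) \<Rightarrow>
     finite V \<and> None \<in> V
   \<and> (\<forall>p n. Some (p, n) \<in> V \<longrightarrow> valid_pid p)
   \<and> (\<forall>p n n'. Some (p, n) \<in> V \<longrightarrow> n' \<le> n \<longrightarrow> Some (p, n') \<in> V)
   \<and> (\<forall>(u, r, v) \<in> ER \<union> EW. u \<in> V \<and> v \<in> V)
   \<and> (\<forall>u u' r v. (u, r, v) \<in> ER \<union> EW \<longrightarrow> (u', r, v) \<in> ER \<union> EW \<longrightarrow> u = u')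
   \<and> ER \<inter> EW = {}
   \<and> acyclic {(u, v). \<exists>r. (u, r, v) \<in> ER \<union> EW}
   \<and> (\<forall>u r v. (u, r, v) \<in> EW \<longrightarrow> u \<noteq> None \<longrightarrow> (\<exists>w. (w, r, u) \<in> EW))
   \<and> (\<forall>u r v v'. (u, r, v) \<in> EW \<longrightarrow> (u, r, v') \<in> EW \<longrightarrow> v = v'))"

text \<open>last(r, E_W): bottom if there is no r-labelled write edge, otherwise the final node
  of the path of r-labelled write edges from bottom (the node entered by an r-edge and
  left by none).\<close>
definition last_node :: "'r \<Rightarrow> 'r edges \<Rightarrow> node" where
  "last_node r EW = (if \<not> (\<exists>u v. (u, r, v) \<in> EW) then None
     else (THE v. (\<exists>u. (u, r, v) \<in> EW) \<and> \<not> (\<exists>w. (v, r, w) \<in> EW)))"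

definition max_p :: "pid \<Rightarrow> node set \<Rightarrow> int" where
  "max_p p V = (if \<exists>n. Some (p, n) \<in> V then int (Max {n. Some (p, n) \<in> V}) else -1)"

definition newedge :: "'r \<Rightarrow> 'r edges \<Rightarrow> node \<Rightarrow> node \<times> 'r \<times> node" where
  "newedge r EW v = (last_node r EW, r, v)"

type_synonym 'r label = "pid \<times> 'r set \<times> 'r set"

datatype 'r lab = Fwd "'r label" | Bwd "'r label"

fun und :: "'r lab \<Rightarrow> 'r label" where
  "und (Fwd a) = a" | "und (Bwd a) = a"

definition ann_fwd :: "'r ann \<Rightarrow> 'r label \<Rightarrow> 'r ann \<Rightarrow> bool" where
  "ann_fwd A1 a A2 \<longleftrightarrow> is_ann_dag A1 \<and> is_ann_dag A2 \<and>
     (case A1 of (V1, ER1, EW1) \<Rightarrow> case A2 of (V2, ER2, EW2) \<Rightarrow> case a of (p, Rd, Wt) \<Rightarrow>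
       (let v = Some (p, nat (max_p p V1 + 1)) in
          V2 = V1 \<union> {v}
        \<and> ER2 = ER1 \<union> {newedge r EW1 v | r. r \<in> Rd - Wt}
        \<and> EW2 = EW1 \<union> {newedge r EW1 v | r. r \<in> Wt}))"

fun ann_step :: "'r ann \<Rightarrow> 'r lab \<Rightarrow> 'r ann \<Rightarrow> bool" where
  "ann_step A1 (Fwd a) A2 = ann_fwd A1 a A2"
| "ann_step A2 (Bwd a) A1 = ann_fwd A1 a A2"

definition iota_lab :: "'r lab \<Rightarrow> 'r lab \<Rightarrow> bool" where
  "iota_lab \<alpha> \<beta> \<longleftrightarrow> (case und \<alpha> of (p1, Rd1, Wt1) \<Rightarrow> case und \<beta> of (p2, Rd2, Wt2) \<Rightarrow>
     \<not> prefix p1 p2 \<and> \<not> prefix p2 p1 \<and> Rd1 \<inter> Wt2 = {} \<and> Rd2 \<inter> Wt1 = {})"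

fun diff :: "'r ann \<Rightarrow> 'r lab \<Rightarrow> 'r ann \<Rightarrow> 'r ann" where
  "diff (V, ER, EW) (Fwd a) (V', ER', EW') = (V' - V, ER' - ER, EW' - EW)"
| "diff (V, ER, EW) (Bwd a) (V', ER', EW') = (V - V', ER - ER', EW - EW')"

end

theory Submission
  imports Defs
begin

text \<open>A backward step along a removes the fresh node v of its process, together with the
  edges entering v; equivalently, A is obtained from del_node v A by a forward a-step. This
  is characterised locally: v is a sink, it is the fresh node of its process in the rest of the
  graph, and the edges entering v are exactly those an a-step would create from the current
  last writers. The independent step \<beta> adds or removes a node w of another process whose
  edges are created from last writers of resources that a does not write, and writes only
  resources that a does not access. Hence it preserves all of these conditions, so removing v
  from A'' is again a backward a-step, and it removes the same node and edges.\<close>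

lemma ex1_end_of_chain:
  assumes "finite E" "acyclic E" "single_valued E" "E \<noteq> {}"
    and from_root: "\<And>u. u \<in> Domain E \<Longrightarrow> u \<noteq> x0 \<Longrightarrow> u \<in> Range E"
  shows "\<exists>!x. x \<in> Range E \<and> x \<notin> Domain E"
proof -
  have reach: "(x0, x) \<in> E\<^sup>*" if "x \<in> Range E" for x
    using that
  proof (induction x rule: wf_induct_rule[OF finite_acyclic_wf[OF assms(1,2)]])
    case (1 x)
    then obtain u where u: "(u, x) \<in> E" by blast
    show ?case
    proof (cases "u = x0")
      case False
      with u from_root have "(x0, u) \<in> E\<^sup>*" using "1.IH" by blast
      then show ?thesis using u by (rule rtrancl_into_rtrancl)
    qed (use u in auto)
  qed
  obtain x where "x \<in> Range E" using \<open>E \<noteq> {}\<close> by auto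
  then obtain m where m: "m \<in> Range E" "\<And>y. (y, m) \<in> E\<inverse> \<Longrightarrow> y \<notin> Range E"
    by (rule wfE_min[OF finite_acyclic_wf_converse[OF assms(1,2)]]) blast
  then have m_end: "m \<notin> Domain E" by blast
  have "x = m" if "x \<in> Range E" "x \<notin> Domain E" for x
    using single_valued_confluent[OF assms(3) reach[OF m(1)] reach[OF that(1)]]
    by (auto simp: Not_Domain_rtrancl m_end that(2))
  with m(1) m_end show ?thesis by blast
qed

definition fresh_node :: "pid \<Rightarrow> node set \<Rightarrow> node" where
  "fresh_node p V = Some (p, nat (max_p p V + 1))"

definition new_edges :: "'r set \<Rightarrow> 'r edges \<Rightarrow> node \<Rightarrow> 'r edges" where
  "new_edges S W v = (\<lambda>r. newedge r W v) ` S"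

definition edges_into :: "node \<Rightarrow> 'r edges \<Rightarrow> 'r edges" where
  "edges_into v E = {(u, r, x) \<in> E. x = v}"

definition del_node :: "node \<Rightarrow> 'r ann \<Rightarrow> 'r ann" where
  "del_node v A = (case A of (V, R, W) \<Rightarrow> (V - {v}, R - edges_into v R, W - edges_into v W))"

lemma mem_new_edges [simp]:
  "(u, r, x) \<in> new_edges S W v \<longleftrightarrow> r \<in> S \<and> u = last_node r W \<and> x = v"
  by (auto simp: new_edges_def newedge_def)

lemma mem_edges_into [simp]: "(u, r, x) \<in> edges_into v E \<longleftrightarrow> (u, r, x) \<in> E \<and> x = v"
  by (simp add: edges_into_def)

lemma del_node_simp:
  "del_node v (V, R, W) = (V - {v}, R - edges_into v R, W - edges_into v W)"
  by (simp add: del_node_def)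

lemma ann_fwd_iff:
  "ann_fwd (V1, R1, W1) (p, Rd, Wt) (V, R, W) \<longleftrightarrow>
     is_ann_dag (V1, R1, W1) \<and> is_ann_dag (V, R, W) \<and> V = V1 \<union> {fresh_node p V1}
   \<and> R = R1 \<union> new_edges (Rd - Wt) W1 (fresh_node p V1)
   \<and> W = W1 \<union> new_edges Wt W1 (fresh_node p V1)"
  unfolding ann_fwd_def Let_def Setcompr_eq_image by (simp add: fresh_node_def new_edges_def)

lemma ann_dag_finite: "is_ann_dag (V, R, W) \<Longrightarrow> finite V"
  unfolding is_ann_dag_def prod.case by blast

lemma ann_dag_bot: "is_ann_dag (V, R, W) \<Longrightarrow> None \<in> V"
  unfolding is_ann_dag_def prod.case by blast

lemma ann_dag_edge_nodes:
  assumes "is_ann_dag (V, R, W)" "(u, r, x) \<in> R \<union> W"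
  shows "u \<in> V" "x \<in> V"
  using assms unfolding is_ann_dag_def prod.case by fast+

lemma ann_dag_acyclic: "is_ann_dag (V, R, W) \<Longrightarrow> acyclic {(u, x). \<exists>r. (u, r, x) \<in> R \<union> W}"
  unfolding is_ann_dag_def prod.case by blast

lemma ann_dag_write_pred:
  "is_ann_dag (V, R, W) \<Longrightarrow> (u, r, x) \<in> W \<Longrightarrow> u \<noteq> None \<Longrightarrow> \<exists>w. (w, r, u) \<in> W"
  unfolding is_ann_dag_def prod.case by blast

lemma ann_dag_write_functional:
  "is_ann_dag (V, R, W) \<Longrightarrow> (u, r, x) \<in> W \<Longrightarrow> (u, r, x') \<in> W \<Longrightarrow> x = x'"
  unfolding is_ann_dag_def prod.case by blast

lemma less_fresh_node:
  assumes "finite V" "Some (p, n) \<in> V" "fresh_node p V = Some (p, m)"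
  shows "n < m"
proof -
  have "finite {n. Some (p, n) \<in> V}"
    using finite_vimageI[OF assms(1), of "\<lambda>n. Some (p, n)"] by (simp add: inj_on_def vimage_def)
  then have "n \<le> Max {n. Some (p, n) \<in> V}" using assms(2) by simp
  then show ?thesis using assms(2,3) by (auto simp: fresh_node_def max_p_def)
qed

lemma fresh_node_notin: "finite V \<Longrightarrow> fresh_node p V \<notin> V"
  using less_fresh_node[of V p] by (force simp: fresh_node_def)

lemma max_p_cong: "(\<And>n. Some (p, n) \<in> V \<longleftrightarrow> Some (p, n) \<in> V') \<Longrightarrow> max_p p V = max_p p V'"
  by (simp add: max_p_def)

lemma last_node_cong:
  "(\<And>u x. (u, r, x) \<in> W \<longleftrightarrow> (u, r, x) \<in> W') \<Longrightarrow> last_node r W = last_node r W'"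
  by (simp add: last_node_def)

lemma last_node_in:
  assumes dag: "is_ann_dag (V, R, W)"
  shows "last_node r W \<in> V"
proof (cases "\<exists>u v. (u, r, v) \<in> W")
  case False
  then show ?thesis using ann_dag_bot[OF dag] by (simp add: last_node_def)
next
  case True
  define E where "E = {(u, x). (u, r, x) \<in> W}"
  have E_nodes: "E \<subseteq> V \<times> V" by (auto simp: E_def dest: ann_dag_edge_nodes[OF dag, OF UnI2])
  have "\<exists>!x. x \<in> Range E \<and> x \<notin> Domain E"
  proof (rule ex1_end_of_chain)
    show "finite E" using E_nodes ann_dag_finite[OF dag] finite_subset by blast
    show "acyclic E" by (rule acyclic_subset[OF ann_dag_acyclic[OF dag]]) (auto simp: E_def)
    show "single_valued E"
      by (auto simp: E_def single_valued_def dest: ann_dag_write_functional[OF dag])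
    show "E \<noteq> {}" using True by (auto simp: E_def)
    show "u \<in> Range E" if "u \<in> Domain E" "u \<noteq> None" for u
      using that by (auto simp: E_def dest: ann_dag_write_pred[OF dag])
  qed
  then obtain e where e: "e \<in> Range E" "e \<notin> Domain E"
    and e_unique: "\<And>x. x \<in> Range E \<Longrightarrow> x \<notin> Domain E \<Longrightarrow> x = e" by blast
  have chain_end: "(\<exists>u. (u, r, x) \<in> W) \<and> \<not> (\<exists>y. (x, r, y) \<in> W) \<longleftrightarrow>
      x \<in> Range E \<and> x \<notin> Domain E" for x
    by (auto simp: E_def)
  have "(THE x. x \<in> Range E \<and> x \<notin> Domain E) = e"
    using e e_unique by (intro the_equality) blast+
  then have "last_node r W = e"
    using True unfolding last_node_def chain_end by simp
  then show ?thesis using e(1) E_nodes by blast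
qed

lemma is_ann_dag_del_node:
  assumes dag: "is_ann_dag (V, R, W)" and v: "v = fresh_node p (V - {v})"
    and sink: "v \<notin> fst ` (R \<union> W)"
  shows "is_ann_dag (del_node v (V, R, W))"
proof -
  let ?R = "R - edges_into v R" and ?W = "W - edges_into v W"
  have "finite (V - {v})" using ann_dag_finite[OF dag] by simp
  then have below_v: "Some (q, m) \<noteq> v" if "Some (q, n) \<in> V - {v}" "m \<le> n" for q n m
    using less_fresh_node[OF _ that(1)] that(2) v by (auto simp: fresh_node_def)
  have not_source: "u \<noteq> v" if "(u, r, x) \<in> R \<union> W" for u r x
    using sink that by force
  have props: "\<forall>p n. Some (p, n) \<in> V \<longrightarrow> valid_pid p"
    "\<forall>p n n'. Some (p, n) \<in> V \<longrightarrow> n' \<le> n \<longrightarrow> Some (p, n') \<in> V"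
    "\<forall>u u' r v. (u, r, v) \<in> R \<union> W \<longrightarrow> (u', r, v) \<in> R \<union> W \<longrightarrow> u = u'"
    "R \<inter> W = {}"
    using dag unfolding is_ann_dag_def prod.case by blast+
  show ?thesis
    unfolding is_ann_dag_def prod.case del_node_simp
  proof (intro conjI)
    have "v \<noteq> None" by (subst v) (simp add: fresh_node_def)
    then show "None \<in> V - {v}" using ann_dag_bot[OF dag] by blast
    show "\<forall>p n n'. Some (p, n) \<in> V - {v} \<longrightarrow> n' \<le> n \<longrightarrow> Some (p, n') \<in> V - {v}"
      using props(2) below_v by blast
    show "\<forall>(u, r, x) \<in> ?R \<union> ?W. u \<in> V - {v} \<and> x \<in> V - {v}"
      by (auto dest: ann_dag_edge_nodes[OF dag, OF UnI1] ann_dag_edge_nodes[OF dag, OF UnI2]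
          not_source[OF UnI1] not_source[OF UnI2])
    show "acyclic {(u, x). \<exists>r. (u, r, x) \<in> ?R \<union> ?W}"
      by (rule acyclic_subset[OF ann_dag_acyclic[OF dag]]) blast
    show "\<forall>u r x. (u, r, x) \<in> ?W \<longrightarrow> u \<noteq> None \<longrightarrow> (\<exists>w. (w, r, u) \<in> ?W)"
      using ann_dag_write_pred[OF dag] not_source by fastforce
    show "\<forall>u r x x'. (u, r, x) \<in> ?W \<longrightarrow> (u, r, x') \<in> ?W \<longrightarrow> x = x'"
      using ann_dag_write_functional[OF dag] by blast
  qed (use ann_dag_finite[OF dag] props in blast)+
qed

lemma ann_fwd_eq_del_node:
  assumes step: "ann_fwd (V1, R1, W1) (p, Rd, Wt) A"
  shows "(V1, R1, W1) = del_node (fresh_node p V1) A"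
proof -
  obtain V R W where A: "A = (V, R, W)" by (cases A)
  let ?v = "fresh_node p V1"
  have dag1: "is_ann_dag (V1, R1, W1)" and V: "V = V1 \<union> {?v}"
    and R: "R = R1 \<union> new_edges (Rd - Wt) W1 ?v" and W: "W = W1 \<union> new_edges Wt W1 ?v"
    using step by (simp_all add: A ann_fwd_iff)
  have "?v \<notin> V1" by (rule fresh_node_notin[OF ann_dag_finite[OF dag1]])
  then have "(u, r, ?v) \<notin> R1" "(u, r, ?v) \<notin> W1" for u r
    using ann_dag_edge_nodes(2)[OF dag1] by blast+
  then show ?thesis using \<open>?v \<notin> V1\<close> by (auto simp: A V R W del_node_simp)
qed

lemma ann_fwd_del_node_iff:
  assumes dag: "is_ann_dag (V, R, W)"
  shows "ann_fwd (del_node v (V, R, W)) (p, Rd, Wt) (V, R, W) \<longleftrightarrow>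
    v \<in> V \<and> v = fresh_node p (V - {v}) \<and> v \<notin> fst ` (R \<union> W) \<and>
    edges_into v R = new_edges (Rd - Wt) (W - edges_into v W) v \<and>
    edges_into v W = new_edges Wt (W - edges_into v W) v"
  (is "?step \<longleftrightarrow> ?added")
proof
  define R0 W0 where "R0 = R - edges_into v R" and "W0 = W - edges_into v W"
  assume ?step
  then have dag0: "is_ann_dag (V - {v}, R0, W0)"
    and V: "V = (V - {v}) \<union> {fresh_node p (V - {v})}"
    and R: "R = R0 \<union> new_edges (Rd - Wt) W0 (fresh_node p (V - {v}))"
    and W: "W = W0 \<union> new_edges Wt W0 (fresh_node p (V - {v}))"
    by (simp_all add: ann_fwd_iff del_node_simp R0_def W0_def)
  have "fresh_node p (V - {v}) \<notin> V - {v}"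
    by (rule fresh_node_notin[OF ann_dag_finite[OF dag0]])
  moreover have "fresh_node p (V - {v}) \<in> V" by (subst V) simp
  ultimately have v_fresh: "fresh_node p (V - {v}) = v" by blast
  with \<open>fresh_node p (V - {v}) \<in> V\<close> have "v \<in> V" by simp
  have sources: "u \<in> V - {v}" if "(u, r, x) \<in> R \<union> W" for u r x
  proof (cases "(u, r, x) \<in> R0 \<union> W0")
    case True
    then show ?thesis by (rule ann_dag_edge_nodes(1)[OF dag0])
  next
    case False
    with that have "u = last_node r W0" by (subst (asm) R, subst (asm) W) auto
    then show ?thesis using last_node_in[OF dag0] by simp
  qed
  have "v \<notin> fst ` (R \<union> W)"
  proof
    assume "v \<in> fst ` (R \<union> W)"
    then obtain r x where "(v, r, x) \<in> R \<union> W" by force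
    then show False using sources by blast
  qed
  moreover have "edges_into v R = new_edges (Rd - Wt) W0 v"
    by (subst R) (auto simp: v_fresh R0_def)
  moreover have "edges_into v W = new_edges Wt W0 v"
    by (subst W) (auto simp: v_fresh W0_def)
  ultimately show ?added
    using \<open>v \<in> V\<close> v_fresh[symmetric] unfolding W0_def[symmetric] by (intro conjI)
next
  assume added: ?added
  then have v: "v \<in> V" and v_fresh: "fresh_node p (V - {v}) = v"
    and R: "edges_into v R = new_edges (Rd - Wt) (W - edges_into v W) v"
    and W: "edges_into v W = new_edges Wt (W - edges_into v W) v"
    by simp_all
  have "is_ann_dag (del_node v (V, R, W))"
    using is_ann_dag_del_node[OF dag] added by blast
  then show ?step
    unfolding ann_fwd_iff del_node_simp v_fresh
  proof (intro conjI)
    show "V = (V - {v}) \<union> {v}" using v by blast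
    show "R = (R - edges_into v R) \<union> new_edges (Rd - Wt) (W - edges_into v W) v"
      unfolding R[symmetric] by auto
    show "W = (W - edges_into v W) \<union> new_edges Wt (W - edges_into v W) v"
      unfolding W[symmetric] by auto
  qed (use dag in simp_all)
qed

lemma new_edges_cong:
  "(\<And>r. r \<in> S \<Longrightarrow> last_node r W = last_node r W') \<Longrightarrow> new_edges S W v = new_edges S W' v"
  by (simp add: new_edges_def newedge_def)

lemma ann_fwd_frame:
  assumes step: "ann_fwd (V, R, W) (p, Rd, Wt) (V', R', W')" and v: "v \<noteq> fresh_node p V"
  shows "v \<in> V' \<longleftrightarrow> v \<in> V" and "edges_into v R' = edges_into v R"
    and "edges_into v W' = edges_into v W"
    and "q \<noteq> p \<Longrightarrow> fresh_node q (V' - {v}) = fresh_node q (V - {v})"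
    and "r \<notin> Wt \<Longrightarrow> last_node r (W' - edges_into v W') = last_node r (W - edges_into v W)"
    and "fst ` (R' \<union> W') \<subseteq> fst ` (R \<union> W) \<union> (\<lambda>r. last_node r W) ` (Rd \<union> Wt)"
proof -
  have V': "V' = V \<union> {fresh_node p V}"
    and R': "R' = R \<union> new_edges (Rd - Wt) W (fresh_node p V)"
    and W': "W' = W \<union> new_edges Wt W (fresh_node p V)"
    using step by (simp_all add: ann_fwd_iff)
  show "v \<in> V' \<longleftrightarrow> v \<in> V" "edges_into v R' = edges_into v R" "edges_into v W' = edges_into v W"
    using v by (auto simp: V' R' W')
  show "fresh_node q (V' - {v}) = fresh_node q (V - {v})" if "q \<noteq> p"
    unfolding fresh_node_def using that
    by (subst max_p_cong[of q _ "V - {v}"]) (auto simp: V' fresh_node_def)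
  show "last_node r (W' - edges_into v W') = last_node r (W - edges_into v W)" if "r \<notin> Wt"
    using that by (intro last_node_cong) (auto simp: W')
  show "fst ` (R' \<union> W') \<subseteq> fst ` (R \<union> W) \<union> (\<lambda>r. last_node r W) ` (Rd \<union> Wt)"
    by (auto simp: R' W' new_edges_def newedge_def)
qed

lemma ann_fwd_del_node_transfer:
  assumes del_a: "ann_fwd (del_node v (V, R, W)) (p, Rd, Wt) (V, R, W)"
    and dag': "is_ann_dag (V', R', W')"
    and same_v: "v \<in> V' \<longleftrightarrow> v \<in> V" "edges_into v R' = edges_into v R"
      "edges_into v W' = edges_into v W"
    and same_fresh: "fresh_node p (V' - {v}) = fresh_node p (V - {v})"
    and same_last: "\<And>r. r \<in> Rd \<union> Wt \<Longrightarrow>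
      last_node r (W' - edges_into v W') = last_node r (W - edges_into v W)"
    and sink': "v \<notin> fst ` (R' \<union> W')"
  shows "ann_fwd (del_node v (V', R', W')) (p, Rd, Wt) (V', R', W')"
proof -
  have dag: "is_ann_dag (V, R, W)" using del_a by (simp add: ann_fwd_def)
  let ?W0 = "W - edges_into v W" and ?W0' = "W' - edges_into v W'"
  have v: "v \<in> V" "v = fresh_node p (V - {v})"
    and into_R: "edges_into v R = new_edges (Rd - Wt) ?W0 v"
    and into_W: "edges_into v W = new_edges Wt ?W0 v"
    using del_a unfolding ann_fwd_del_node_iff[OF dag] by blast+
  have new: "new_edges S ?W0 v = new_edges S ?W0' v" if "S \<subseteq> Rd \<union> Wt" for S
    using that same_last by (intro new_edges_cong) (simp add: subset_iff)
  have "edges_into v R' = new_edges (Rd - Wt) ?W0' v"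
    unfolding same_v(2) into_R by (rule new) blast
  moreover have "edges_into v W' = new_edges Wt ?W0' v"
  proof -
    have "edges_into v W' = new_edges Wt ?W0 v" using same_v(3) into_W by (rule trans)
    also have "\<dots> = new_edges Wt ?W0' v" by (rule new) blast
    finally show ?thesis .
  qed
  moreover have "v = fresh_node p (V' - {v})"
    unfolding same_fresh by (rule v(2))
  moreover have "v \<in> V'" using v(1) same_v(1) by simp
  ultimately show ?thesis
    using sink' unfolding ann_fwd_del_node_iff[OF dag'] by (intro conjI)
qed

lemma ann_fwd_del_node_after_fwd:
  assumes del_a: "ann_fwd (del_node v D) (pa, Rda, Wta) D"
    and step_b: "ann_fwd D (pb, Rdb, Wtb) D'"
    and indep: "pa \<noteq> pb" "(Rda \<union> Wta) \<inter> Wtb = {}" "(Rdb \<union> Wtb) \<inter> Wta = {}"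
  shows "ann_fwd (del_node v D') (pa, Rda, Wta) D'"
proof -
  obtain V R W where D: "D = (V, R, W)" by (cases D)
  obtain V' R' W' where D': "D' = (V', R', W')" by (cases D')
  let ?W0 = "W - edges_into v W"
  have dag: "is_ann_dag (V, R, W)" and dag': "is_ann_dag (V', R', W')"
    and dag0: "is_ann_dag (V - {v}, R - edges_into v R, ?W0)"
    using del_a step_b unfolding D D' del_node_simp ann_fwd_iff by blast+
  have v: "v \<in> V" "v \<notin> fst ` (R \<union> W)" and into_W: "edges_into v W = new_edges Wta ?W0 v"
    using del_a unfolding D ann_fwd_del_node_iff[OF dag] by blast+
  have "fresh_node pb V \<notin> V" by (rule fresh_node_notin[OF ann_dag_finite[OF dag]])
  with v(1) have "v \<noteq> fresh_node pb V" by blast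
  note frame = ann_fwd_frame[OF step_b[unfolded D D'] this]
  have labels: "r \<in> Wta" if "(u, r, x) \<in> edges_into v W" for u r x
    using that by (subst (asm) into_W) simp
  have "last_node r W \<in> V - {v}" if "r \<in> Rdb \<union> Wtb" for r
  proof -
    have "r \<notin> Wta" using that indep(3) by blast
    then have "last_node r W = last_node r ?W0"
      by (intro last_node_cong) (use labels in auto)
    then show ?thesis using last_node_in[OF dag0, of r] by simp
  qed
  then have "v \<notin> (\<lambda>r. last_node r W) ` (Rdb \<union> Wtb)" by auto
  then have "v \<notin> fst ` (R' \<union> W')" using v(2) frame(6) by blast
  moreover have "r \<notin> Wtb" if "r \<in> Rda \<union> Wta" for r using that indep(2) by blast
  ultimately show ?thesis
    using ann_fwd_del_node_transfer[OF del_a[unfolded D] dag' frame(1-3) frame(4)[OF indep(1)]]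
      frame(5) unfolding D' by blast
qed

lemma ann_fwd_del_node_before_fwd:
  assumes del_a: "ann_fwd (del_node v D) (pa, Rda, Wta) D"
    and step_b: "ann_fwd D' (pb, Rdb, Wtb) D"
    and indep: "pa \<noteq> pb" "(Rda \<union> Wta) \<inter> Wtb = {}"
  shows "ann_fwd (del_node v D') (pa, Rda, Wta) D'"
proof -
  obtain V R W where D: "D = (V, R, W)" by (cases D)
  obtain V' R' W' where D': "D' = (V', R', W')" by (cases D')
  have dag: "is_ann_dag (V, R, W)" and dag': "is_ann_dag (V', R', W')"
    and sub: "R' \<subseteq> R" "W' \<subseteq> W"
    using del_a step_b unfolding D D' del_node_simp ann_fwd_iff by auto
  have v: "v = fresh_node pa (V - {v})" "v \<notin> fst ` (R \<union> W)"
    using del_a unfolding D ann_fwd_del_node_iff[OF dag] by blast+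
  have "v \<noteq> fresh_node pb V'"
    using indep(1) by (subst v(1)) (simp add: fresh_node_def)
  note frame = ann_fwd_frame[OF step_b[unfolded D D'] this]
  have "v \<notin> fst ` (R' \<union> W')" using v(2) sub by blast
  moreover have "r \<notin> Wtb" if "r \<in> Rda \<union> Wta" for r using that indep(2) by blast
  ultimately show ?thesis
    using ann_fwd_del_node_transfer[OF del_a[unfolded D] dag' frame(1-3)[symmetric]
        frame(4)[OF indep(1), symmetric]] frame(5)[symmetric] unfolding D' by blast
qed

lemma diff_del_node:
  "diff (V, R, W) (Bwd c) (del_node v (V, R, W)) = (V \<inter> {v}, edges_into v R, edges_into v W)"
  by (auto simp: del_node_simp)

lemma diff_del_node_ann_fwd:
  assumes "ann_fwd (V, R, W) (p, Rd, Wt) (V', R', W')" "v \<noteq> fresh_node p V"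
  shows "diff (V', R', W') (Bwd c) (del_node v (V', R', W')) =
    diff (V, R, W) (Bwd c) (del_node v (V, R, W))"
  using ann_fwd_frame(1-3)[OF assms] by (auto simp: diff_del_node)

theorem mainTheorem4:
  fixes a :: "'r label" and \<beta> :: "'r lab" and A A' A'' :: "'r ann"
  assumes "valid_pid (fst a)" and "valid_pid (fst (und \<beta>))"
    and "snd (snd a) \<subseteq> fst (snd a)"
    and "snd (snd (und \<beta>)) \<subseteq> fst (snd (und \<beta>))"
    and "ann_step A (Bwd a) A'"
    and "ann_step A \<beta> A''"
    and "iota_lab (Bwd a) \<beta>"
  shows "\<exists>A'''. ann_step A'' (Bwd a) A''' \<and> diff A (Bwd a) A' = diff A'' (Bwd a) A'''"
proof -
  obtain pa Rda Wta where a: "a = (pa, Rda, Wta)" by (cases a)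
  obtain pb Rdb Wtb where b: "und \<beta> = (pb, Rdb, Wtb)" by (cases "und \<beta>")
  obtain V1 R1 W1 where A': "A' = (V1, R1, W1)" by (cases A')
  obtain V R W where A: "A = (V, R, W)" by (cases A)
  obtain V'' R'' W'' where A'': "A'' = (V'', R'', W'')" by (cases A'')
  define v where "v = fresh_node pa V1"
  have step_a: "ann_fwd A' a A" using assms(5) by simp
  then have A'_del: "A' = del_node v A" unfolding A' a v_def by (rule ann_fwd_eq_del_node)
  with step_a have del_a: "ann_fwd (del_node v A) (pa, Rda, Wta) A" by (simp add: a)
  have indep: "pa \<noteq> pb" "(Rda \<union> Wta) \<inter> Wtb = {}" "(Rdb \<union> Wtb) \<inter> Wta = {}"
    using assms(3,4,7) unfolding iota_lab_def a b by auto
  have v_other: "v \<noteq> fresh_node pb X" for X using indep(1) by (simp add: v_def fresh_node_def)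
  have "ann_fwd (del_node v A'') a A'' \<and>
    diff A (Bwd a) (del_node v A) = diff A'' (Bwd a) (del_node v A'')"
  proof (cases \<beta>)
    case Fwd
    then have "ann_fwd A (pb, Rdb, Wtb) A''" using assms(6) b by simp
    then show ?thesis
      using ann_fwd_del_node_after_fwd[OF del_a _ indep] diff_del_node_ann_fwd[OF _ v_other]
      unfolding a A A'' by metis
  next
    case Bwd
    then have "ann_fwd A'' (pb, Rdb, Wtb) A" using assms(6) b by simp
    then show ?thesis
      using ann_fwd_del_node_before_fwd[OF del_a _ indep(1,2)] diff_del_node_ann_fwd[OF _ v_other]
      unfolding a A A'' by metis
  qed
  then show ?thesis using A'_del by (intro exI[of _ "del_node v A''"]) simp
qed

end
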